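(* For every training set $S=\{(x_i,y_i)\}_{i=1}^n$, every $1\le k\le n$ and every classifier $f_\theta$, $$L_{0-1}(\{(y_i,f_\theta(x_i))\}_{i=1}^n)-k<\frac{1}{M}L_{\textrm{close-}k}(\{\ell(y_i,f_\theta(x_i))\}_{i=1}^n)<L_{0-1}(\{(y_i,f_\theta(x_i))\}_{i=1}^n)+k,$$ where $L_{0-1}$ is the number of misclassified training examples.
   Context: Binary classification with labels $y\in\{-1,+1\}$ and real-valued predictions. An individual loss $\ell(y,f(x))\ge 0$ comes with a threshold $T$ such that an example is correctly classified iff its individual loss is below $T$. Given individual losses $\ell_1,\dots,\ell_n$, let $\ell_{[i]}$ be the individual loss with the $i$-th smallest value of $|\ell_j-T|$. For a constant $M$ at least as large as every individual loss that occurs, the close-$k$ aggregate loss is $L_{\textrm{close-}k}(\{\ell_i\})=\sum_{i=1}^n c_i$ with $c_i=\ell_{[i]}$ if $i\le k$, $c_i=0$ if $i>k$ and $\ell_{[i]}$ is correctly classified, and $c_i=M$ if $i>k$ and $\ell_{[i]}$ is incorrectly classified. *)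

theory Defs
  imports Main "HOL.Real"
begin

text \<open>An example with label y and real prediction p is correctly classified iff
  sign p = y, i.e. y * p > 0 (for y in {-1,+1}).\<close>
definition correctly_classified :: "real \<Rightarrow> real \<Rightarrow> bool" where
  "correctly_classified yy p \<longleftrightarrow> yy * p > 0"

definition L01 :: "nat \<Rightarrow> (nat \<Rightarrow> real) \<Rightarrow> (nat \<Rightarrow> real) \<Rightarrow> nat" where
  "L01 n y p = card {i \<in> {..<n}. \<not> correctly_classified (y i) (p i)}"

text \<open>sigma orders the individual losses l 0, ..., l (n-1) by increasing |l j - T|,
  so l (sigma i) is the loss with the (i+1)-th smallest distance to T (ties arbitrary).\<close>
definition close_order :: "real \<Rightarrow> nat \<Rightarrow> (nat \<Rightarrow> real) \<Rightarrow> (nat \<Rightarrow> nat) \<Rightarrow> bool" where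
  "close_order T n l \<sigma> \<longleftrightarrow> bij_betw \<sigma> {..<n} {..<n} \<and>
     (\<forall>i j. i \<le> j \<longrightarrow> j < n \<longrightarrow> \<bar>l (\<sigma> i) - T\<bar> \<le> \<bar>l (\<sigma> j) - T\<bar>)"

text \<open>close-k aggregate loss (0-indexed positions: position i < k means i+1 \<le> k).
  An individual loss is correctly classified iff it is below T.\<close>
definition close_k_loss :: "real \<Rightarrow> real \<Rightarrow> nat \<Rightarrow> nat \<Rightarrow> (nat \<Rightarrow> real) \<Rightarrow> (nat \<Rightarrow> nat) \<Rightarrow> real" where
  "close_k_loss T M k n l \<sigma> =
     (\<Sum>i<n. if i < k then l (\<sigma> i) else if l (\<sigma> i) < T then 0 else M)"

end

theory Submission
  imports Defs
begin

text \<open>Divide the close-k loss by M and compare it position by position with the 0-1 loss,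
  counted along the same ordering. Beyond position k the two agree exactly (M/M = 1 for a
  misclassified example, 0 otherwise). At each of the first k positions the difference is
  l/M if the loss l is below T and l/M - 1 otherwise; since 0 < T \<le> M and 0 \<le> l \<le> M,
  it lies strictly between -1 and 1. Summing the k differences gives the claim.\<close>

lemma abs_sum_less_card:
  fixes d :: "'a \<Rightarrow> real"
  assumes "finite A" "A \<noteq> {}" "\<And>i. i \<in> A \<Longrightarrow> \<bar>d i\<bar> < 1"
  shows "\<bar>sum d A\<bar> < card A"
proof -
  have "\<bar>sum d A\<bar> \<le> (\<Sum>i\<in>A. \<bar>d i\<bar>)"
    by (rule sum_abs)
  also have "\<dots> < (\<Sum>i\<in>A. 1)"
    using assms by (intro sum_strict_mono) auto
  finally show ?thesis
    by simp
qed

lemma abs_scaled_loss_minus_indicator_less_1: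
  fixes l T M :: real
  assumes "0 < T" "T \<le> M" "0 \<le> l" "l \<le> M"
  shows "\<bar>l / M - (if l < T then 0 else 1)\<bar> < 1"
proof (cases "l < T")
  case True
  then have "l / M < 1"
    using assms by (simp add: divide_less_eq)
  with True assms show ?thesis
    by simp
next
  case False
  then have "0 < l / M"
    using assms by simp
  moreover have "l / M \<le> 1"
    using assms by simp
  ultimately show ?thesis
    using False by simp
qed

lemma close_k_loss_div_minus_misclassified:
  fixes l :: "nat \<Rightarrow> real"
  assumes bij: "bij_betw \<sigma> {..<n} {..<n}" and "k \<le> n" and "M \<noteq> 0"
  shows "close_k_loss T M k n l \<sigma> / M - card {j \<in> {..<n}. \<not> l j < T}
    = (\<Sum>i<k. l (\<sigma> i) / M - (if l (\<sigma> i) < T then 0 else 1))"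
proof -
  define miss where "miss j = (if l j < T then 0 else 1 :: real)" for j
  have "real (card {j \<in> {..<n}. \<not> l j < T}) = (\<Sum>j\<in>{j \<in> {..<n}. \<not> l j < T}. 1)"
    by simp
  also have "\<dots> = (\<Sum>j<n. miss j)"
    unfolding miss_def by (subst sum.inter_filter) (auto intro: sum.cong)
  also have "\<dots> = (\<Sum>i<n. miss (\<sigma> i))"
    using sum.reindex_bij_betw[OF bij, of miss] by simp
  finally have "close_k_loss T M k n l \<sigma> / M - card {j \<in> {..<n}. \<not> l j < T}
      = (\<Sum>i<n. (if i < k then l (\<sigma> i) else if l (\<sigma> i) < T then 0 else M) / M - miss (\<sigma> i))"
    unfolding close_k_loss_def by (simp add: sum_divide_distrib sum_subtractf)
  also have "\<dots> = (\<Sum>i<k. l (\<sigma> i) / M - miss (\<sigma> i))"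
    using \<open>k \<le> n\<close> \<open>M \<noteq> 0\<close> by (intro sum.mono_neutral_cong_right) (auto simp: miss_def)
  finally show ?thesis
    unfolding miss_def .
qed

lemma threshold_bounds:
  fixes loss :: "real \<Rightarrow> real \<Rightarrow> real"
  assumes "\<forall>yy\<in>{-1, 1}. \<forall>p. loss yy p \<ge> 0"
    and "\<forall>yy\<in>{-1, 1}. \<forall>p. correctly_classified yy p \<longleftrightarrow> loss yy p < T"
    and "\<forall>yy\<in>{-1, 1}. \<forall>p. loss yy p \<le> M"
  shows "0 < T" "T \<le> M"
proof -
  have "correctly_classified 1 1" and "\<not> correctly_classified 1 (-1)"
    by (simp_all add: correctly_classified_def)
  then have "loss 1 1 < T" and "\<not> loss 1 (-1) < T"
    using assms(2) by auto
  moreover have "0 \<le> loss 1 1" and "loss 1 (-1) \<le> M"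
    using assms(1,3) by auto
  ultimately show "0 < T" "T \<le> M"
    by linarith+
qed

theorem lemma3:
  fixes loss :: "real \<Rightarrow> real \<Rightarrow> real"
    and T M :: real
    and n k :: nat
    and x :: "nat \<Rightarrow> 'a"
    and y :: "nat \<Rightarrow> real"
    and f :: "'a \<Rightarrow> real"
    and \<sigma> :: "nat \<Rightarrow> nat"
  assumes loss_nonneg: "\<forall>yy\<in>{-1, 1}. \<forall>p. loss yy p \<ge> 0"
    and threshold: "\<forall>yy\<in>{-1, 1}. \<forall>p. correctly_classified yy p \<longleftrightarrow> loss yy p < T"
    and M_bound: "\<forall>yy\<in>{-1, 1}. \<forall>p. loss yy p \<le> M"
    and labels: "\<forall>i<n. y i \<in> {-1, 1}"
    and k_pos: "1 \<le> k" and k_le: "k \<le> n"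
    and order: "close_order T n (\<lambda>i. loss (y i) (f (x i))) \<sigma>"
  shows "real (L01 n y (\<lambda>i. f (x i))) - real k
           < close_k_loss T M k n (\<lambda>i. loss (y i) (f (x i))) \<sigma> / M
       \<and> close_k_loss T M k n (\<lambda>i. loss (y i) (f (x i))) \<sigma> / M
           < real (L01 n y (\<lambda>i. f (x i))) + real k"
proof -
  define l where "l i = loss (y i) (f (x i))" for i
  have T: "0 < T" "T \<le> M"
    using threshold_bounds[OF loss_nonneg threshold M_bound] by auto
  have bij: "bij_betw \<sigma> {..<n} {..<n}"
    using order unfolding close_order_def l_def by blast
  have L01: "L01 n y (\<lambda>i. f (x i)) = card {j \<in> {..<n}. \<not> l j < T}"
    unfolding L01_def l_def using labels threshold by (metis lessThan_iff)
  have "\<bar>l (\<sigma> i) / M - (if l (\<sigma> i) < T then 0 else 1)\<bar> < 1" if "i < k" for i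
  proof -
    have "y (\<sigma> i) \<in> {-1, 1}"
      using labels bij_betw_apply[OF bij] that k_le by simp
    then show ?thesis
      using T loss_nonneg M_bound unfolding l_def
      by (intro abs_scaled_loss_minus_indicator_less_1) auto
  qed
  then have "\<bar>\<Sum>i<k. l (\<sigma> i) / M - (if l (\<sigma> i) < T then 0 else 1)\<bar> < card {..<k}"
    using k_pos by (intro abs_sum_less_card) (auto simp: lessThan_empty_iff)
  then have "\<bar>close_k_loss T M k n l \<sigma> / M - L01 n y (\<lambda>i. f (x i))\<bar> < k"
    using close_k_loss_div_minus_misclassified[OF bij k_le] T by (simp add: L01)
  then show ?thesis
    unfolding l_def[abs_def] by linarith
qed

end
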